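(* For $n\ge 0$ let $S_n$ be the lattice of order ideals of the shifted staircase poset $\{(i,j)\in\mathbb Z^2:1\le i\le j\le n\}$ (componentwise order), ordered by inclusion. Then \[ \sum_{n=0}^\infty \d(S_n)\,x^n = \frac{8x\left(1+\sqrt{1-4x}-x\big(3+\sqrt{1-4x}\big)\right)}{(1-4x)\big(1-4x+\sqrt{1-4x}\big)^3}. \]
   Context: For a finite poset $Q$, $\d(Q)=\sum_{(p,q)\in Q\times Q}\d(p,q)$ is the Wiener index of its Hasse diagram, where $\d(p,q)$ is the graph distance in the Hasse diagram (edges = cover relations) and the sum runs over ordered pairs. $S_0$ has a single element. *)

theory Defs
  imports Complex_Main
begin

definition shifted_staircase :: "nat \<Rightarrow> (nat \<times> nat) set" where
  "shifted_staircase n = {(i, j). 1 \<le> i \<and> i \<le> j \<and> j \<le> n}"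

definition order_ideals :: "nat \<Rightarrow> (nat \<times> nat) set set" where
  "order_ideals n = {I. I \<subseteq> shifted_staircase n \<and>
     (\<forall>p\<in>I. \<forall>q\<in>shifted_staircase n.
        fst q \<le> fst p \<and> snd q \<le> snd p \<longrightarrow> q \<in> I)}"

text \<open>S_n: the lattice of order ideals, ordered by inclusion (given by its carrier).\<close>
definition S :: "nat \<Rightarrow> (nat \<times> nat) set set" where
  "S n = order_ideals n"

definition covers :: "'a set set \<Rightarrow> 'a set \<Rightarrow> 'a set \<Rightarrow> bool" where
  "covers A I J \<longleftrightarrow> I \<in> A \<and> J \<in> A \<and> I \<subset> J \<and> \<not> (\<exists>K\<in>A. I \<subset> K \<and> K \<subset> J)"

definition hasse_adj :: "'a set set \<Rightarrow> 'a set \<Rightarrow> 'a set \<Rightarrow> bool" where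
  "hasse_adj A I J \<longleftrightarrow> covers A I J \<or> covers A J I"

definition hasse_walk :: "'a set set \<Rightarrow> nat \<Rightarrow> 'a set \<Rightarrow> 'a set \<Rightarrow> bool" where
  "hasse_walk A k p q \<longleftrightarrow> (\<exists>xs. length xs = Suc k \<and> xs ! 0 = p \<and> xs ! k = q \<and>
      set xs \<subseteq> A \<and> (\<forall>i<k. hasse_adj A (xs ! i) (xs ! Suc i)))"

definition hasse_dist :: "'a set set \<Rightarrow> 'a set \<Rightarrow> 'a set \<Rightarrow> nat" where
  "hasse_dist A p q = (LEAST k. hasse_walk A k p q)"

definition wiener :: "'a set set \<Rightarrow> nat" where
  "wiener A = (\<Sum>(p, q)\<in>A \<times> A. hasse_dist A p q)"

end

theory Submission
  imports Defs "HOL-Analysis.Generalised_Binomial_Theorem"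
begin

text \<open>
  Between two order ideals one can always walk by adding or deleting one element at a time,
  so the Hasse distance in \<open>S n\<close> is the size of the symmetric difference. An ideal of the
  \<open>(n+1)\<close>-staircase either is an ideal of the \<open>n\<close>-staircase or consists of the full first row
  together with a shifted ideal of the \<open>n\<close>-staircase. Consequently its diagonal is an initial
  segment whose length \<open>d\<close> is binomially distributed, and forgetting the diagonal while sliding
  the rest one column to the left maps \<open>S (n+1)\<close> two-to-one onto \<open>S n\<close>. Splitting symmetric
  differences into diagonal and off-diagonal parts therefore gives \<open>W(n+1) = 4 W(n) + E(n+1)\<close>
  for the Wiener index \<open>W\<close>, where \<open>E(n)\<close>, the sum of \<open>|d(I) - d(J)|\<close> over all pairs of
  ideals, equals \<open>n C(2n,n)\<close>. Hence \<open>W(n+1) = 2 (-4)^n C(-5/2, n)\<close>, and the generating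
  function is \<open>2x (1-4x)^(-5/2)\<close>.
\<close>

section \<open>Families of sets in which the Hasse distance is the symmetric difference\<close>

text \<open>The one-step form of well-gradedness, as in knowledge space theory.\<close>
definition well_graded :: "'a set set \<Rightarrow> bool" where
  "well_graded A \<longleftrightarrow> (\<forall>X\<in>A. \<forall>Y\<in>A. X \<noteq> Y \<longrightarrow>
     (\<exists>p\<in>X - Y. X - {p} \<in> A) \<or> (\<exists>p\<in>Y - X. insert p X \<in> A))"

lemma covers_insert:
  assumes "X \<in> A" "insert p X \<in> A" "p \<notin> X"
  shows "covers A X (insert p X)"
  using assms unfolding covers_def by (auto simp: psubset_insert_iff)

lemma covers_imp_insert:
  assumes "well_graded A" "covers A X Y"
  obtains p where "p \<notin> X" "Y = insert p X"
proof -
  have XY: "X \<in> A" "Y \<in> A" "X \<subset> Y" and between: "\<not> (\<exists>K\<in>A. X \<subset> K \<and> K \<subset> Y)"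
    using assms(2) by (auto simp: covers_def)
  then have "X - Y = {}" "X \<noteq> Y" by auto
  then obtain p where p: "p \<in> Y - X" "insert p X \<in> A"
    using assms(1) XY(1,2) unfolding well_graded_def by blast
  then have "insert p X \<subseteq> Y" "X \<subset> insert p X" using XY(3) by auto
  with between p(2) have "Y = insert p X" by auto
  with p that show ?thesis by blast
qed

lemma hasse_adj_card_sym_diff:
  assumes "well_graded A" "hasse_adj A X Y"
  shows "card (sym_diff X Y) = 1"
proof -
  have "card (sym_diff X Y) = 1" if cover: "covers A X Y" for X Y
  proof -
    obtain p where "p \<notin> X" "Y = insert p X"
      using covers_imp_insert[OF assms(1) cover] .
    then have "sym_diff X Y = {p}" by auto
    then show ?thesis by simp
  qed
  moreover have "sym_diff X Y = sym_diff Y X" by blast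
  ultimately show ?thesis using assms(2) unfolding hasse_adj_def by metis
qed

lemma well_graded_step:
  assumes "well_graded A" "X \<in> A" "Y \<in> A" "X \<noteq> Y"
  obtains p X' where "X' \<in> A" "hasse_adj A X X'" "p \<in> sym_diff X Y"
    "sym_diff X' Y = sym_diff X Y - {p}"
proof -
  from assms consider p where "p \<in> X - Y" "X - {p} \<in> A" | p where "p \<in> Y - X" "insert p X \<in> A"
    unfolding well_graded_def by blast
  then show ?thesis
  proof cases
    case 1
    then have "covers A (X - {p}) X"
      using covers_insert[of "X - {p}" A p] assms(2) by (simp add: insert_absorb)
    then have "hasse_adj A X (X - {p})" by (simp add: hasse_adj_def)
    with 1 show ?thesis by (intro that[of "X - {p}" p]) auto
  next
    case 2
    with covers_insert[of X A p] assms(2) have "hasse_adj A X (insert p X)"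
      by (simp add: hasse_adj_def)
    with 2 show ?thesis by (intro that[of "insert p X" p]) auto
  qed
qed

lemma hasse_walk_Cons:
  assumes "hasse_adj A X X'" "X \<in> A" "hasse_walk A k X' Y"
  shows "hasse_walk A (Suc k) X Y"
proof -
  obtain xs where xs: "length xs = Suc k" "xs ! 0 = X'" "xs ! k = Y" "set xs \<subseteq> A"
    "\<forall>i<k. hasse_adj A (xs ! i) (xs ! Suc i)"
    using assms(3) unfolding hasse_walk_def by blast
  show ?thesis unfolding hasse_walk_def
  proof (intro exI[of _ "X # xs"] conjI allI impI)
    fix i assume "i < Suc k"
    then show "hasse_adj A ((X # xs) ! i) ((X # xs) ! Suc i)"
      using xs assms(1) by (cases i) auto
  qed (use xs assms(2) in auto)
qed

lemma hasse_walk_SucE: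
  assumes "hasse_walk A (Suc k) X Y"
  obtains X' where "X \<in> A" "X' \<in> A" "hasse_adj A X X'" "hasse_walk A k X' Y"
proof -
  obtain xs where xs: "length xs = Suc (Suc k)" "xs ! 0 = X" "xs ! Suc k = Y" "set xs \<subseteq> A"
    "\<forall>i<Suc k. hasse_adj A (xs ! i) (xs ! Suc i)"
    using assms unfolding hasse_walk_def by blast
  then obtain ys where ys: "xs = X # ys" by (cases xs) auto
  have walk: "hasse_walk A k (ys ! 0) Y"
    unfolding hasse_walk_def by (rule exI[of _ ys]) (use xs ys in auto)
  have "set ys \<subseteq> A" "ys \<noteq> []" "X \<in> A" using xs(1,4) ys by auto
  moreover have "hasse_adj A X (ys ! 0)" using xs(5)[rule_format, of 0] ys by simp
  ultimately show ?thesis using that walk by (meson length_greater_0_conv nth_mem subsetD)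
qed

lemma hasse_walk_endpoint_mem:
  "hasse_walk A k X Y \<Longrightarrow> Y \<in> A"
  unfolding hasse_walk_def by (metis lessI nth_mem subsetD)

context
  fixes A :: "'a set set"
  assumes well_graded: "well_graded A" and finite_members: "\<And>X. X \<in> A \<Longrightarrow> finite X"
begin

lemma card_sym_diff_le_hasse_walk:
  "hasse_walk A k X Y \<Longrightarrow> card (sym_diff X Y) \<le> k"
proof (induction k arbitrary: X)
  case 0
  then show ?case by (auto simp: hasse_walk_def)
next
  case (Suc k)
  from Suc.prems obtain X' where X': "X \<in> A" "X' \<in> A" "hasse_adj A X X'" "hasse_walk A k X' Y"
    by (rule hasse_walk_SucE)
  have "Y \<in> A" using X'(4) by (rule hasse_walk_endpoint_mem)
  with X'(1,2) have "finite (sym_diff X X' \<union> sym_diff X' Y)"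
    using finite_members by blast
  then have "card (sym_diff X Y) \<le> card (sym_diff X X' \<union> sym_diff X' Y)"
    by (rule card_mono) blast
  also have "\<dots> \<le> card (sym_diff X X') + card (sym_diff X' Y)" by (rule card_Un_le)
  finally show ?case
    using Suc.IH[OF X'(4)] hasse_adj_card_sym_diff[OF well_graded X'(3)] by simp
qed

lemma hasse_walk_card_sym_diff:
  "X \<in> A \<Longrightarrow> Y \<in> A \<Longrightarrow> hasse_walk A (card (sym_diff X Y)) X Y"
proof (induction "card (sym_diff X Y)" arbitrary: X)
  case 0
  have "finite (sym_diff X Y)" using 0 finite_members by blast
  with 0 have "sym_diff X Y = {}" by simp
  then have "X = Y" by blast
  then show ?case unfolding hasse_walk_def using 0 by (intro exI[of _ "[X]"]) auto
next
  case (Suc m)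
  then have "X \<noteq> Y" by auto
  then obtain p X' where X': "X' \<in> A" "hasse_adj A X X'" "p \<in> sym_diff X Y"
    "sym_diff X' Y = sym_diff X Y - {p}"
    using well_graded_step[OF well_graded Suc.prems] by blast
  have "finite (sym_diff X Y)" using Suc.prems finite_members by blast
  with X'(3,4) Suc.hyps(2) have "card (sym_diff X' Y) = m" by simp
  with Suc.hyps(1) X'(1) Suc.prems(2) have walk: "hasse_walk A m X' Y" by metis
  show ?case
    unfolding Suc.hyps(2)[symmetric] by (rule hasse_walk_Cons[OF X'(2) Suc.prems(1) walk])
qed

theorem hasse_dist_eq_card_sym_diff:
  "X \<in> A \<Longrightarrow> Y \<in> A \<Longrightarrow> hasse_dist A X Y = card (sym_diff X Y)"
  unfolding hasse_dist_def
  by (rule Least_equality) (auto intro: hasse_walk_card_sym_diff dest: card_sym_diff_le_hasse_walk)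

end

section \<open>Order ideals of the shifted staircase\<close>

lemma mem_S_iff:
  "I \<in> S n \<longleftrightarrow> I \<subseteq> shifted_staircase n \<and>
     (\<forall>i j a b. (i, j) \<in> I \<longrightarrow> 1 \<le> a \<longrightarrow> a \<le> b \<longrightarrow> a \<le> i \<longrightarrow> b \<le> j \<longrightarrow> (a, b) \<in> I)"
  unfolding S_def order_ideals_def shifted_staircase_def by (auto; fastforce)

lemma mem_shifted_staircase_iff:
  "(i, j) \<in> shifted_staircase n \<longleftrightarrow> 1 \<le> i \<and> i \<le> j \<and> j \<le> n"
  by (simp add: shifted_staircase_def)

lemma S_memD:
  "I \<in> S n \<Longrightarrow> (i, j) \<in> I \<Longrightarrow> 1 \<le> i \<and> i \<le> j \<and> j \<le> n"
  by (auto simp: mem_S_iff mem_shifted_staircase_iff)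

lemma S_down_closed:
  "I \<in> S n \<Longrightarrow> (i, j) \<in> I \<Longrightarrow> 1 \<le> a \<Longrightarrow> a \<le> b \<Longrightarrow> a \<le> i \<Longrightarrow> b \<le> j \<Longrightarrow> (a, b) \<in> I"
  by (simp add: mem_S_iff)

lemma finite_shifted_staircase: "finite (shifted_staircase n)"
  by (rule finite_subset[of _ "{1..n} \<times> {1..n}"]) (auto simp: shifted_staircase_def)

lemma finite_S: "finite (S n)"
  by (rule finite_subset[of _ "Pow (shifted_staircase n)"]) (auto simp: mem_S_iff finite_shifted_staircase)

lemma finite_mem_S: "I \<in> S n \<Longrightarrow> finite I"
  using finite_shifted_staircase finite_subset by (auto simp: mem_S_iff)

lemma S_0: "S 0 = {{}}"
  by (force simp: mem_S_iff shifted_staircase_def)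

text \<open>The rank \<open>i + j\<close> strictly increases along the order, so a rank-minimal element of
  \<open>Y - X\<close> can be added to \<open>X\<close>, and a rank-maximal element of \<open>X - Y\<close> removed from it.\<close>

lemma insert_rank_min_mem_S:
  assumes X: "X \<in> S n" and Y: "Y \<in> S n" and p: "p \<in> Y - X"
    and min: "\<forall>q\<in>Y - X. fst p + snd p \<le> fst q + snd q"
  shows "insert p X \<in> S n"
  unfolding mem_S_iff
proof (intro conjI allI impI)
  show "insert p X \<subseteq> shifted_staircase n" using p X Y by (auto simp: mem_S_iff)
next
  fix i j a b assume h: "(i, j) \<in> insert p X" "1 \<le> a" "a \<le> b" "a \<le> i" "b \<le> j"
  show "(a, b) \<in> insert p X"
  proof (cases "(i, j) \<in> X")
    case True
    then show ?thesis using S_down_closed[OF X True h(2-5)] by simp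
  next
    case False
    with h(1) have "p = (i, j)" by simp
    moreover have "(a, b) \<in> Y" using S_down_closed[OF Y _ h(2-5)] p \<open>p = (i, j)\<close> by simp
    ultimately show ?thesis using min h(4,5) by force
  qed
qed

lemma remove_rank_max_mem_S:
  assumes X: "X \<in> S n" and Y: "Y \<in> S n" and p: "p \<in> X - Y"
    and max: "\<forall>q\<in>X - Y. fst q + snd q \<le> fst p + snd p"
  shows "X - {p} \<in> S n"
  unfolding mem_S_iff
proof (intro conjI allI impI)
  show "X - {p} \<subseteq> shifted_staircase n" using X by (auto simp: mem_S_iff)
next
  fix i j a b assume h: "(i, j) \<in> X - {p}" "1 \<le> a" "a \<le> b" "a \<le> i" "b \<le> j"
  show "(a, b) \<in> X - {p}"
  proof (rule ccontr)
    assume "(a, b) \<notin> X - {p}"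
    with S_down_closed[OF X _ h(2-5)] h(1) have pab: "p = (a, b)" by simp
    with p S_down_closed[OF Y _ h(2-5)] have "(i, j) \<in> X - Y" using h(1) by auto
    with max pab have "i + j \<le> a + b" by force
    with h(1,4,5) pab show False by auto
  qed
qed

lemma well_graded_S: "well_graded (S n)"
  unfolding well_graded_def
proof (intro ballI impI)
  fix X Y assume X: "X \<in> S n" and Y: "Y \<in> S n" and "X \<noteq> Y"
  have fin: "finite (X - Y)" using finite_mem_S[OF X] by simp
  let ?rank = "\<lambda>q :: nat \<times> nat. fst q + snd q"
  show "(\<exists>p\<in>X - Y. X - {p} \<in> S n) \<or> (\<exists>p\<in>Y - X. insert p X \<in> S n)"
  proof (cases "X - Y = {}")
    case False
    then have "Max (?rank ` (X - Y)) \<in> ?rank ` (X - Y)" using fin by simp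
    then obtain p where "p \<in> X - Y" "?rank p = Max (?rank ` (X - Y))" by auto
    moreover have "\<forall>q\<in>X - Y. ?rank q \<le> Max (?rank ` (X - Y))" using fin by simp
    ultimately have "X - {p} \<in> S n" by (intro remove_rank_max_mem_S[OF X Y]) auto
    with \<open>p \<in> X - Y\<close> show ?thesis by blast
  next
    case True
    with \<open>X \<noteq> Y\<close> obtain q where "q \<in> Y - X" by blast
    then obtain p where "p \<in> Y - X" "\<forall>q\<in>Y - X. ?rank p \<le> ?rank q"
      using ex_has_least_nat[of "\<lambda>q. q \<in> Y - X" q ?rank] by blast
    then show ?thesis using insert_rank_min_mem_S[OF X Y] by blast
  qed
qed

lemma hasse_dist_S: "I \<in> S n \<Longrightarrow> J \<in> S n \<Longrightarrow> hasse_dist (S n) I J = card (sym_diff I J)"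
  by (rule hasse_dist_eq_card_sym_diff[OF well_graded_S finite_mem_S])

section \<open>Removing the first row\<close>

definition first_row :: "nat \<Rightarrow> (nat \<times> nat) set" where
  "first_row m = {(1, j) | j. 1 \<le> j \<and> j \<le> m}"

definition shift :: "(nat \<times> nat) set \<Rightarrow> (nat \<times> nat) set" where
  "shift K = (\<lambda>(i, j). (Suc i, Suc j)) ` K"

definition add_row :: "nat \<Rightarrow> (nat \<times> nat) set \<Rightarrow> (nat \<times> nat) set" where
  "add_row n K = first_row (Suc n) \<union> shift K"

lemma S_Suc_if_S: "I \<in> S n \<Longrightarrow> I \<in> S (Suc n)"
  by (auto simp: mem_S_iff mem_shifted_staircase_iff)

lemma add_row_mem_S:
  assumes K: "K \<in> S n"
  shows "add_row n K \<in> S (Suc n)"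
  unfolding mem_S_iff
proof (intro conjI allI impI)
  show "add_row n K \<subseteq> shifted_staircase (Suc n)"
    using K by (force simp: add_row_def first_row_def shift_def mem_S_iff mem_shifted_staircase_iff)
next
  fix i j a b assume h: "(i, j) \<in> add_row n K" "1 \<le> a" "a \<le> b" "a \<le> i" "b \<le> j"
  show "(a, b) \<in> add_row n K"
  proof (cases "a = 1")
    case True
    with h K show ?thesis by (force simp: add_row_def first_row_def shift_def dest: S_memD)
  next
    case False
    then obtain a' b' where ab: "a = Suc a'" "b = Suc b'" "1 \<le> a'"
      using h(2,3) by (metis One_nat_def Suc_le_D le_antisym le_trans not_less_eq_eq)
    from h False have "(i, j) \<in> shift K" by (auto simp: add_row_def first_row_def)
    then obtain i' j' where "i = Suc i'" "j = Suc j'" "(i', j') \<in> K" by (auto simp: shift_def)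
    with S_down_closed[OF K] ab h have "(a', b') \<in> K" by simp
    with ab show ?thesis by (auto simp: add_row_def shift_def)
  qed
qed

lemma S_if_corner_notin:
  assumes I: "I \<in> S (Suc n)" and corner: "(1, Suc n) \<notin> I"
  shows "I \<in> S n"
proof -
  have "j \<le> n" if "(i, j) \<in> I" for i j
    using S_down_closed[OF I that, of 1 j] S_memD[OF I that] corner by (cases "j = Suc n") auto
  then show ?thesis
    using I by (auto simp: mem_S_iff mem_shifted_staircase_iff)
qed

lemma add_row_if_corner_mem:
  assumes I: "I \<in> S (Suc n)" and corner: "(1, Suc n) \<in> I"
  obtains K where "K \<in> S n" "I = add_row n K"
proof
  define K where "K = {(i, j). 1 \<le> i \<and> (Suc i, Suc j) \<in> I}"
  show "K \<in> S n"
    unfolding mem_S_iff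
  proof (intro conjI allI impI)
    show "K \<subseteq> shifted_staircase n"
      using S_memD[OF I] by (fastforce simp: K_def mem_shifted_staircase_iff)
    fix i j a b assume "(i, j) \<in> K" "1 \<le> a" "a \<le> b" "a \<le> i" "b \<le> j"
    then show "(a, b) \<in> K"
      using S_down_closed[OF I, of "Suc i" "Suc j" "Suc a" "Suc b"] by (auto simp: K_def)
  qed
  have "first_row (Suc n) \<subseteq> I"
    using S_down_closed[OF I corner] by (auto simp: first_row_def)
  moreover have "(i, j) \<in> first_row (Suc n) \<union> shift K" if "(i, j) \<in> I" for i j
  proof (cases "i = 1")
    case True
    then show ?thesis using S_memD[OF I that] by (auto simp: first_row_def)
  next
    case False
    with S_memD[OF I that] obtain i' j' where "i = Suc i'" "j = Suc j'" "1 \<le> i'"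
      by (metis One_nat_def Suc_le_D Suc_le_mono le_antisym not_less_eq_eq)
    with that show ?thesis by (auto simp: shift_def K_def image_iff)
  qed
  ultimately show "I = add_row n K"
    unfolding add_row_def by (auto simp: shift_def K_def)
qed

lemma S_Suc: "S (Suc n) = S n \<union> add_row n ` S n"
proof
  show "S n \<union> add_row n ` S n \<subseteq> S (Suc n)"
    using S_Suc_if_S add_row_mem_S by blast
  show "S (Suc n) \<subseteq> S n \<union> add_row n ` S n"
  proof
    fix I assume I: "I \<in> S (Suc n)"
    show "I \<in> S n \<union> add_row n ` S n"
    proof (cases "(1, Suc n) \<in> I")
      case True
      then show ?thesis using add_row_if_corner_mem[OF I] by blast
    qed (use S_if_corner_notin[OF I] in blast)
  qed
qed

lemma inj_shift: "inj shift"
proof (rule injI)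
  fix A B assume "shift A = shift B"
  moreover have "inj (\<lambda>(i :: nat, j :: nat). (Suc i, Suc j))" by (auto simp: inj_def)
  ultimately show "A = B" unfolding shift_def by (simp add: inj_image_eq_iff)
qed

lemma inj_on_add_row: "inj_on (add_row n) (S n)"
proof (rule inj_onI)
  fix A B assume A: "A \<in> S n" and B: "B \<in> S n" and eq: "add_row n A = add_row n B"
  have "shift X = add_row n X \<inter> {p. 2 \<le> fst p}" if "X \<in> S n" for X
  proof -
    have "first_row (Suc n) \<inter> {p. 2 \<le> fst p} = {}" by (auto simp: first_row_def)
    moreover have "shift X \<subseteq> {p. 2 \<le> fst p}" using S_memD[OF that] by (auto simp: shift_def)
    ultimately show ?thesis unfolding add_row_def by blast
  qed
  with A B eq have "shift A = shift B" by metis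
  then show "A = B" using inj_shift by (simp add: inj_eq)
qed

lemma S_disjoint_add_row: "S n \<inter> add_row n ` S n = {}"
proof -
  have "(1, Suc n) \<in> add_row n K" for K by (simp add: add_row_def first_row_def)
  moreover have "(1, Suc n) \<notin> I" if "I \<in> S n" for I using S_memD[OF that, of 1 "Suc n"] by auto
  ultimately show ?thesis by blast
qed

lemma sum_S_Suc:
  "(\<Sum>I\<in>S (Suc n). f I) = (\<Sum>I\<in>S n. f I) + (\<Sum>K\<in>S n. f (add_row n K))"
proof -
  have "(\<Sum>I\<in>S (Suc n). f I) = (\<Sum>I\<in>S n. f I) + (\<Sum>I\<in>add_row n ` S n. f I)"
    unfolding S_Suc by (rule sum.union_disjoint) (use finite_S S_disjoint_add_row in auto)
  also have "(\<Sum>I\<in>add_row n ` S n. f I) = (\<Sum>K\<in>S n. f (add_row n K))"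
    by (rule sum.reindex[OF inj_on_add_row, unfolded comp_def])
  finally show ?thesis .
qed

section \<open>Diagonal and off-diagonal parts\<close>

definition diag :: "(nat \<times> nat) set \<Rightarrow> nat set" where
  "diag I = {i. (i, i) \<in> I}"

definition diag_length :: "(nat \<times> nat) set \<Rightarrow> nat" where
  "diag_length I = card (diag I)"

lemma diag_add_row: "diag (add_row n K) = insert 1 (Suc ` diag K)"
  by (auto simp: diag_def add_row_def first_row_def shift_def image_iff)

lemma diag_S: "I \<in> S n \<Longrightarrow> diag I = {1..diag_length I}"
proof (induction n arbitrary: I)
  case 0
  then show ?case by (simp add: S_0 diag_length_def diag_def)
next
  case (Suc n)
  show ?case
  proof (cases "I \<in> S n")
    case False
    with Suc.prems obtain K where K: "K \<in> S n" "I = add_row n K" by (auto simp: S_Suc)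
    have "insert 1 (Suc ` {1..m}) = {1..Suc m}" for m
      by (auto simp: image_Suc_atLeastAtMost)
    then have "diag I = {1..Suc (diag_length K)}"
      using K Suc.IH[OF K(1)] by (simp add: diag_add_row)
    then show ?thesis by (simp add: diag_length_def)
  qed (rule Suc.IH)
qed

lemma diag_length_add_row:
  assumes "K \<in> S n"
  shows "diag_length (add_row n K) = Suc (diag_length K)"
proof -
  have "diag (add_row n K) = insert 1 (Suc ` {1..diag_length K})"
    by (simp add: diag_add_row diag_S[OF assms])
  then show ?thesis by (simp add: diag_length_def card_image)
qed

lemma sum_choose_Suc:
  fixes h :: "nat \<Rightarrow> 'a :: comm_semiring_1"
  shows "(\<Sum>k\<le>Suc n. of_nat (Suc n choose k) * h k) =
    (\<Sum>k\<le>n. of_nat (n choose k) * h k) + (\<Sum>k\<le>n. of_nat (n choose k) * h (Suc k))"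
proof -
  have "(\<Sum>k\<le>Suc n. of_nat (Suc n choose k) * h k) =
      h 0 + (\<Sum>k\<le>n. of_nat (Suc n choose Suc k) * h (Suc k))"
    by (simp only: sum.atMost_Suc_shift) simp
  also have "\<dots> = h 0 + (\<Sum>k\<le>n. of_nat (n choose Suc k) * h (Suc k)) +
      (\<Sum>k\<le>n. of_nat (n choose k) * h (Suc k))"
    by (simp add: sum.distrib algebra_simps)
  also have "h 0 + (\<Sum>k\<le>n. of_nat (n choose Suc k) * h (Suc k)) =
      (\<Sum>k\<le>Suc n. of_nat (n choose k) * h k)"
    by (simp only: sum.atMost_Suc_shift) simp
  also have "\<dots> = (\<Sum>k\<le>n. of_nat (n choose k) * h k)"
    by (simp add: binomial_eq_0)
  finally show ?thesis .
qed

lemma sum_diag_length: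
  fixes h :: "nat \<Rightarrow> 'a :: comm_semiring_1"
  shows "(\<Sum>I\<in>S n. h (diag_length I)) = (\<Sum>k\<le>n. of_nat (n choose k) * h k)"
proof (induction n arbitrary: h)
  case 0
  then show ?case by (simp add: S_0 diag_length_def diag_def)
next
  case (Suc n)
  have "(\<Sum>I\<in>S (Suc n). h (diag_length I)) =
      (\<Sum>I\<in>S n. h (diag_length I)) + (\<Sum>K\<in>S n. h (Suc (diag_length K)))"
    by (simp add: sum_S_Suc diag_length_add_row cong: sum.cong)
  also have "\<dots> = (\<Sum>k\<le>Suc n. of_nat (Suc n choose k) * h k)"
    unfolding sum_choose_Suc using Suc.IH[of h] Suc.IH[of "\<lambda>k. h (Suc k)"] by simp
  finally show ?case .
qed

definition off_diag :: "(nat \<times> nat) set \<Rightarrow> (nat \<times> nat) set" where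
  "off_diag I = (\<lambda>(i, j). (i, j - 1)) ` {p \<in> I. fst p < snd p}"

lemma off_diag_add_row: "off_diag (add_row (Suc n) K) = add_row n (off_diag K)"
proof -
  have "off_diag (first_row (Suc (Suc n))) = first_row (Suc n)"
    unfolding off_diag_def first_row_def by (force simp: image_iff)
  moreover have "off_diag (shift K) = shift (off_diag K)"
    unfolding off_diag_def shift_def by (force simp: image_iff)
  moreover have "off_diag (A \<union> B) = off_diag A \<union> off_diag B" for A B
    by (auto simp: off_diag_def)
  ultimately show ?thesis by (simp add: add_row_def)
qed

lemma sum_off_diag:
  fixes h :: "(nat \<times> nat) set \<Rightarrow> 'a :: comm_semiring_1"
  shows "(\<Sum>I\<in>S (Suc n). h (off_diag I)) = 2 * (\<Sum>K\<in>S n. h K)"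
proof (induction n arbitrary: h)
  case 0
  have "off_diag {} = {}" "off_diag (add_row 0 {}) = {}"
    by (auto simp: off_diag_def add_row_def first_row_def shift_def)
  then show ?case by (simp add: sum_S_Suc S_0 mult_2)
next
  case (Suc n)
  have "(\<Sum>I\<in>S (Suc (Suc n)). h (off_diag I)) =
      (\<Sum>I\<in>S (Suc n). h (off_diag I)) + (\<Sum>K\<in>S (Suc n). h (add_row n (off_diag K)))"
    by (simp add: sum_S_Suc off_diag_add_row)
  also have "\<dots> = 2 * (\<Sum>K\<in>S (Suc n). h K)"
    using Suc.IH[of h] Suc.IH[of "\<lambda>X. h (add_row n X)"] by (simp add: sum_S_Suc distrib_left)
  finally show ?case .
qed

lemma card_sym_diff_atLeastAtMost:
  "real (card (sym_diff {1..a :: nat} {1..b})) = \<bar>real a - real b\<bar>"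
proof (cases "a \<le> b")
  case True
  then have "sym_diff {1..a} {1..b} = {Suc a..b}" by auto
  with True show ?thesis by simp
next
  case False
  then have "sym_diff {1..a} {1..b} = {Suc b..a}" by auto
  with False show ?thesis by simp
qed

lemma card_sym_diff_S:
  assumes I: "I \<in> S n" and J: "J \<in> S n"
  shows "real (card (sym_diff I J)) =
    real (card (sym_diff (off_diag I) (off_diag J))) + \<bar>real (diag_length I) - real (diag_length J)\<bar>"
proof -
  let ?f = "\<lambda>(i :: nat, j :: nat). (i, j - 1)"
  let ?U = "{p :: nat \<times> nat. fst p < snd p}"
  let ?D = "{p :: nat \<times> nat. fst p = snd p}"
  have fin: "finite (sym_diff I J)" using finite_mem_S[OF I] finite_mem_S[OF J] by simp
  have "fst p \<le> snd p" if "p \<in> sym_diff I J" for p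
    using that S_memD[OF I, of "fst p" "snd p"] S_memD[OF J, of "fst p" "snd p"] by auto
  then have "sym_diff I J - ?U = sym_diff I J \<inter> ?D" by fastforce
  then have split: "card (sym_diff I J) = card (sym_diff I J \<inter> ?U) + card (sym_diff I J \<inter> ?D)"
    using card_Int_Diff[OF fin, of ?U] by simp
  have inj: "inj_on ?f ?U" by (auto simp: inj_on_def)
  have "off_diag X = ?f ` (X \<inter> ?U)" for X by (auto simp: off_diag_def)
  moreover have "?f ` (X \<inter> ?U) - ?f ` (Y \<inter> ?U) = ?f ` (X \<inter> ?U - Y \<inter> ?U)" for X Y
    by (rule inj_on_image_set_diff[OF inj, symmetric]) auto
  ultimately have "sym_diff (off_diag I) (off_diag J) = ?f ` (sym_diff I J \<inter> ?U)"
    by (simp add: image_Un Int_Un_distrib2 Diff_Int_distrib2)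
  moreover have "inj_on ?f (sym_diff I J \<inter> ?U)" using inj by (rule inj_on_subset) blast
  ultimately have off: "card (sym_diff (off_diag I) (off_diag J)) = card (sym_diff I J \<inter> ?U)"
    by (simp add: card_image)
  have "sym_diff I J \<inter> ?D = (\<lambda>i. (i, i)) ` sym_diff (diag I) (diag J)"
    by (auto simp: diag_def image_iff)
  then have on: "card (sym_diff I J \<inter> ?D) = card (sym_diff (diag I) (diag J))"
    by (simp add: card_image inj_on_def)
  show ?thesis
    unfolding split off on diag_S[OF I] diag_S[OF J] of_nat_add card_sym_diff_atLeastAtMost ..
qed

section \<open>The recursion for the Wiener index\<close>

definition total_sym_diff :: "nat \<Rightarrow> real" where
  "total_sym_diff n = (\<Sum>I\<in>S n. \<Sum>J\<in>S n. real (card (sym_diff I J)))"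

definition total_diag_diff :: "nat \<Rightarrow> real" where
  "total_diag_diff n =
    (\<Sum>I\<in>S n. \<Sum>J\<in>S n. \<bar>real (diag_length I) - real (diag_length J)\<bar>)"

lemma wiener_S: "real (wiener (S n)) = total_sym_diff n"
proof -
  have "real (wiener (S n)) = (\<Sum>(I, J)\<in>S n \<times> S n. real (card (sym_diff I J)))"
    unfolding wiener_def of_nat_sum by (rule sum.cong) (auto simp: hasse_dist_S)
  then show ?thesis by (simp add: total_sym_diff_def sum.cartesian_product)
qed

lemma total_sym_diff_Suc:
  "total_sym_diff (Suc n) = 4 * total_sym_diff n + total_diag_diff (Suc n)"
proof -
  let ?d = "\<lambda>I J. real (card (sym_diff I J))"
  have "total_sym_diff (Suc n) =
      (\<Sum>I\<in>S (Suc n). \<Sum>J\<in>S (Suc n). ?d (off_diag I) (off_diag J)) + total_diag_diff (Suc n)"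
    unfolding total_sym_diff_def total_diag_diff_def by (simp add: card_sym_diff_S sum.distrib)
  also have "(\<Sum>I\<in>S (Suc n). \<Sum>J\<in>S (Suc n). ?d (off_diag I) (off_diag J)) =
      (\<Sum>I\<in>S (Suc n). 2 * (\<Sum>J\<in>S n. ?d (off_diag I) J))"
    by (rule sum.cong[OF refl sum_off_diag])
  also have "\<dots> = 2 * (\<Sum>I\<in>S (Suc n). \<Sum>J\<in>S n. ?d (off_diag I) J)"
    by (simp add: sum_distrib_left)
  also have "(\<Sum>I\<in>S (Suc n). \<Sum>J\<in>S n. ?d (off_diag I) J) = 2 * total_sym_diff n"
    unfolding total_sym_diff_def by (rule sum_off_diag)
  finally show ?thesis by simp
qed

lemma sum_abs_diff_Suc:
  fixes a b :: nat
  shows "\<bar>real a - real b\<bar> + \<bar>real a - real (Suc b)\<bar> +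
      (\<bar>real (Suc a) - real b\<bar> + \<bar>real (Suc a) - real (Suc b)\<bar>) =
    4 * \<bar>real a - real b\<bar> + 2 * (if a = b then 1 else 0)"
  by (cases a b rule: linorder_cases) auto

definition central_binom :: "nat \<Rightarrow> real" where
  "central_binom n = real ((2 * n) choose n)"

lemma central_binom_Suc:
  "real (Suc n) * central_binom (Suc n) = 2 * (2 * real n + 1) * central_binom n"
proof -
  have sym: "Suc (2 * n) choose n = Suc (2 * n) choose Suc n"
    using binomial_symmetric[of n "Suc (2 * n)"] by (simp add: Suc_diff_le)
  have "Suc n * ((2 * Suc n) choose Suc n) = Suc (Suc (2 * n)) * (Suc (2 * n) choose n)"
    using Suc_times_binomial[of n "Suc (2 * n)"] by simp
  also have "\<dots> = 2 * ((Suc (2 * n) choose Suc n) * Suc n)"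
    unfolding sym by (simp del: binomial_Suc_Suc)
  also have "\<dots> = 2 * (Suc (2 * n) * (2 * n choose n))"
    unfolding Suc_times_binomial_eq ..
  finally have "Suc n * ((2 * Suc n) choose Suc n) = 2 * (2 * n + 1) * ((2 * n) choose n)"
    by simp
  then have "real (Suc n * ((2 * Suc n) choose Suc n)) = real (2 * (2 * n + 1) * ((2 * n) choose n))"
    by (rule arg_cong)
  then show ?thesis
    unfolding central_binom_def by (simp only: of_nat_mult of_nat_add of_nat_1 of_nat_numeral)
qed

lemma count_equal_diag_length:
  "(\<Sum>I\<in>S n. \<Sum>J\<in>S n. if diag_length I = diag_length J then 1 else 0) = central_binom n"
proof -
  have "(\<Sum>J\<in>S n. if a = diag_length J then 1 else 0) = real (n choose a)" for a
    using sum_diag_length[of "\<lambda>k. if a = k then 1 else 0 :: real" n]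
    by (simp add: if_distrib[of "\<lambda>x. _ * x"] sum.delta cong: if_cong)
  then have "(\<Sum>I\<in>S n. \<Sum>J\<in>S n. if diag_length I = diag_length J then 1 else 0) =
      (\<Sum>I\<in>S n. real (n choose diag_length I))"
    by simp
  also have "\<dots> = (\<Sum>k\<le>n. real (n choose k) * real (n choose k))"
    by (rule sum_diag_length)
  also have "\<dots> = real (\<Sum>k\<le>n. (n choose k)\<^sup>2)"
    by (simp add: power2_eq_square)
  finally show ?thesis by (simp add: choose_square_sum central_binom_def)
qed

lemma total_diag_diff_Suc:
  "total_diag_diff (Suc n) = 4 * total_diag_diff n + 2 * central_binom n"
proof -
  let ?d = "\<lambda>a b :: nat. \<bar>real a - real b\<bar>"
  have "total_diag_diff (Suc n) = (\<Sum>I\<in>S n. \<Sum>J\<in>S n.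
      ?d (diag_length I) (diag_length J) + ?d (diag_length I) (Suc (diag_length J)) +
      (?d (Suc (diag_length I)) (diag_length J) + ?d (Suc (diag_length I)) (Suc (diag_length J))))"
    unfolding total_diag_diff_def
    by (simp add: sum_S_Suc diag_length_add_row sum.distrib sum_distrib_left cong: sum.cong)
  also have "\<dots> = (\<Sum>I\<in>S n. \<Sum>J\<in>S n. 4 * ?d (diag_length I) (diag_length J) +
      2 * (if diag_length I = diag_length J then 1 else 0))"
    by (simp only: sum_abs_diff_Suc)
  also have "\<dots> = 4 * total_diag_diff n +
      2 * (\<Sum>I\<in>S n. \<Sum>J\<in>S n. if diag_length I = diag_length J then 1 else 0)"
    unfolding total_diag_diff_def by (simp only: sum.distrib sum_distrib_left)
  finally show ?thesis by (simp only: count_equal_diag_length)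
qed

lemma total_diag_diff_eq: "total_diag_diff n = real n * central_binom n"
proof (induction n)
  case 0
  then show ?case by (simp add: total_diag_diff_def S_0)
next
  case (Suc n)
  have "total_diag_diff (Suc n) = 2 * (2 * real n + 1) * central_binom n"
    by (simp add: total_diag_diff_Suc Suc.IH algebra_simps)
  then show ?case by (simp only: central_binom_Suc)
qed

lemma total_sym_diff_Suc_eq:
  "3 * total_sym_diff (Suc n) = 2 * central_binom n * (2 * real n + 1) * (2 * real n + 3)"
proof (induction n)
  case 0
  have "total_sym_diff 0 = 0" by (simp add: total_sym_diff_def S_0)
  then show ?case
    using total_sym_diff_Suc[of 0] total_diag_diff_eq[of 1] by (simp add: central_binom_def)
next
  case (Suc n)
  let ?c = central_binom
  have "3 * total_sym_diff (Suc (Suc n)) =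
      4 * (3 * total_sym_diff (Suc n)) + 3 * (real (Suc (Suc n)) * ?c (Suc (Suc n)))"
    by (simp add: total_sym_diff_Suc[of "Suc n"] total_diag_diff_eq)
  also have "\<dots> = 4 * (2 * real n + 3) * (2 * (2 * real n + 1) * ?c n) + 6 * (2 * real n + 3) * ?c (Suc n)"
    unfolding Suc.IH central_binom_Suc by (simp add: algebra_simps)
  also have "\<dots> = 2 * ?c (Suc n) * (2 * real (Suc n) + 1) * (2 * real (Suc n) + 3)"
    unfolding central_binom_Suc[symmetric] by (simp add: algebra_simps)
  finally show ?case .
qed

lemma gbinomial_minus_five_halves:
  "3 * ((-5/2 :: real) gchoose n) * (-4) ^ n = central_binom n * (2 * real n + 1) * (2 * real n + 3)"
proof (induction n)
  case 0
  then show ?case by (simp add: central_binom_def)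
next
  case (Suc n)
  let ?g = "\<lambda>k. (-5/2 :: real) gchoose k"
  have rec: "real (Suc n) * ?g (Suc n) = (-5/2 - real n) * ?g n"
    using gbinomial_mult_1'[of "-5/2 :: real" n] by (simp add: algebra_simps)
  have "real (Suc n) * (3 * ?g (Suc n) * (-4) ^ Suc n) = 3 * (-4) ^ Suc n * (real (Suc n) * ?g (Suc n))"
    by (simp only: mult_ac)
  also have "\<dots> = (2 * real n + 5) * (2 * (3 * ?g n * (-4) ^ n))"
    unfolding rec by (simp add: algebra_simps)
  also have "\<dots> = (2 * real n + 3) * (2 * real n + 5) * (2 * (2 * real n + 1) * central_binom n)"
    unfolding Suc.IH by (simp add: algebra_simps)
  also have "\<dots> = real (Suc n) *
      (central_binom (Suc n) * (2 * real (Suc n) + 1) * (2 * real (Suc n) + 3))"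
    unfolding central_binom_Suc[symmetric] by (simp add: algebra_simps)
  finally show ?case by (rule mult_left_cancel[THEN iffD1, rotated]) simp
qed

lemma total_sym_diff_Suc_gbinomial:
  "total_sym_diff (Suc n) = 2 * (((-5/2 :: real) gchoose n) * (-4) ^ n)"
  using total_sym_diff_Suc_eq[of n] gbinomial_minus_five_halves[of n] by simp

section \<open>The generating function\<close>

lemma powr_minus_five_halves_eq:
  fixes x :: real
  assumes "\<bar>x\<bar> < 1/4"
  shows "2 * x * (1 - 4*x) powr (-5/2) =
    8 * x * (1 + sqrt (1 - 4*x) - x * (3 + sqrt (1 - 4*x))) /
     ((1 - 4*x) * (1 - 4*x + sqrt (1 - 4*x)) ^ 3)"
proof -
  define s where "s = sqrt (1 - 4*x)"
  have pos: "1 - 4*x > 0" using assms by auto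
  then have "s > 0" by (simp add: s_def)
  have sq: "1 - 4*x = s\<^sup>2" using pos by (simp add: s_def)
  have "(1 - 4*x) powr (5/2) = (1 - 4*x) powr 2 * (1 - 4*x) powr (1/2)"
    by (simp flip: powr_add)
  also have "\<dots> = (1 - 4*x)\<^sup>2 * s"
    using pos by (simp add: s_def powr_half_sqrt)
  also have "\<dots> = s ^ 5"
    unfolding sq by (simp add: eval_nat_numeral)
  finally have pw: "(1 - 4*x) powr (-5/2) = 1 / s ^ 5"
    by (simp add: powr_minus_divide)
  have x_eq: "x = (1 - s\<^sup>2) / 4" using sq by simp
  have "(1 + s) ^ 3 = 4 * (1 + s - x * (3 + s))"
    unfolding x_eq by (simp add: power2_eq_square power3_eq_cube field_simps)
  then have num: "8 * x * (1 + s - x * (3 + s)) = 2 * x * (1 + s) ^ 3"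
    by simp
  have "1 - 4*x + s = s * (1 + s)"
    unfolding sq by (simp add: power2_eq_square algebra_simps)
  then have den: "(1 - 4*x) * (1 - 4*x + s) ^ 3 = s ^ 5 * (1 + s) ^ 3"
    by (simp add: sq power_mult_distrib flip: power_add)
  show ?thesis
    unfolding pw s_def[symmetric] num den using \<open>s > 0\<close> by simp
qed

lemma sums_wiener_S:
  fixes x :: real
  assumes "\<bar>x\<bar> < 1/4"
  shows "(\<lambda>n. real (wiener (S n)) * x ^ n) sums (2 * x * (1 - 4 * x) powr (-5/2))"
proof -
  have "\<bar>-4 * x\<bar> < 1" using assms by auto
  then have "(\<lambda>n. ((-5/2 :: real) gchoose n) * (-4 * x) ^ n) sums (1 + -4 * x) powr (-5/2)"
    by (rule gen_binomial_real)
  then have "(\<lambda>n. 2 * x * (((-5/2 :: real) gchoose n) * (-4 * x) ^ n)) sums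
      (2 * x * (1 - 4 * x) powr (-5/2))"
    by (simp add: sums_mult)
  moreover have "(\<lambda>n. 2 * x * (((-5/2 :: real) gchoose n) * (-4 * x) ^ n)) =
      (\<lambda>n. real (wiener (S (Suc n))) * x ^ Suc n)"
  proof
    fix n
    have "(-4 * x) ^ n = (-4) ^ n * x ^ n" by (rule power_mult_distrib)
    then show "2 * x * (((-5/2 :: real) gchoose n) * (-4 * x) ^ n) = real (wiener (S (Suc n))) * x ^ Suc n"
      by (simp only: wiener_S total_sym_diff_Suc_gbinomial power_Suc) (simp add: algebra_simps)
  qed
  ultimately have "(\<lambda>n. real (wiener (S (Suc n))) * x ^ Suc n) sums (2 * x * (1 - 4 * x) powr (-5/2))"
    by simp
  then have "(\<lambda>n. real (wiener (S n)) * x ^ n) sums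
      (2 * x * (1 - 4 * x) powr (-5/2) + real (wiener (S 0)) * x ^ 0)"
    by (rule sums_Suc)
  moreover have "real (wiener (S 0)) = 0"
    unfolding wiener_S by (simp add: total_sym_diff_def S_0)
  ultimately show ?thesis by simp
qed


theorem theorem1p5:
  fixes x :: real
  assumes "\<bar>x\<bar> < 1/4"
  shows "(\<lambda>n. real (wiener (S n)) * x ^ n) sums
    (8 * x * (1 + sqrt (1 - 4*x) - x * (3 + sqrt (1 - 4*x))) /
     ((1 - 4*x) * (1 - 4*x + sqrt (1 - 4*x)) ^ 3))"
  using sums_wiener_S[OF assms] powr_minus_five_halves_eq[OF assms] by simp

end
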